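(* Let $A$ be a $2\times2$ matrix of Laurent polynomials with compatible symmetry. Then there exist strongly invertible $2\times2$ matrices $P$ and $Q$ of Laurent polynomials with compatible symmetry such that $$P(z)A(z)Q(z)=\mathrm{diag}(e_1(z),e_2(z)),$$ where all multiplications are compatible and both $e_1,e_2$ have symmetry. Furthermore, if $d_1,d_2$ are the invariant polynomials of $A$, then $\{Z(e_1,z_0),Z(e_2,z_0)\}=\{Z(d_1,z_0),Z(d_2,z_0)\}$ (as multisets) for all $z_0\in\mathbb C\setminus\{0\}$.
   Context: Laurent polynomials $u(z)=\sum_ku(k)z^k$ with finitely many nonzero complex coefficients. $u$ has symmetry of type $\epsilon z^c$ if $u(z)=\epsilon z^cu(z^{-1})$; zero has every type. A type means $\pm z^m$, $m\in\mathbb Z$. An $r\times s$ matrix $P$ has compatible symmetry if there are types $\tau_1,\dots,\tau_r,\rho_1,\dots,\rho_s$ with each $P_{j,k}$ of type $\tau_j^{-1}\rho_k$. A product $P_1\cdots P_m$ is compatible if there are type vectors $\tau^{(0)},\dots,\tau^{(m)}$ with each entry $(P_i)_{j,k}$ of type $(\tau^{(i-1)}_j)^{-1}\tau^{(i)}_k$. A square matrix is strongly invertible if its determinant is a nonzero monomial. $Z(u,z_0)$ is the multiplicity of $z_0$ as a zero of $u$. Invariant polynomials: $A$ has a Smith normal form $A=E\,\mathrm{diag}(d_1,d_2)\,F$ with $E,F$ strongly invertible $2\times2$ matrices of Laurent polynomials and $d_1,d_2$ monic polynomials with nonzero constant terms (or zero) such that $d_1\mid d_2$; these $d_1,d_2$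 are the invariant polynomials of $A$. *)

theory Defs
  imports "HOL-Analysis.Analysis"
    "HOL-Computational_Algebra.Formal_Laurent_Series"
    "HOL-Computational_Algebra.Polynomial_FPS"
    "HOL-Library.Multiset"
begin

text \<open>Laurent polynomials are represented as formal Laurent series over the complex
numbers with finitely many nonzero coefficients; u(k) is written fls_nth u k.\<close>

definition laurent_poly :: "complex fls \<Rightarrow> bool" where
  "laurent_poly u \<longleftrightarrow> finite {k. fls_nth u k \<noteq> 0}"

text \<open>A symmetry type (eps, m) stands for eps z^m with eps in {1,-1}.\<close>
type_synonym sym_type = "complex \<times> int"

definition valid_type :: "sym_type \<Rightarrow> bool" where
  "valid_type t \<longleftrightarrow> fst t = 1 \<or> fst t = -1"

text \<open>u has symmetry of type eps z^c: u(z) = eps z^c u(1/z), i.e. u(k) = eps u(c-k).\<close>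
definition has_sym_type :: "complex fls \<Rightarrow> sym_type \<Rightarrow> bool" where
  "has_sym_type u t \<longleftrightarrow> (\<forall>k. fls_nth u k = fst t * fls_nth u (snd t - k))"

definition has_symmetry :: "complex fls \<Rightarrow> bool" where
  "has_symmetry u \<longleftrightarrow> (\<exists>t. valid_type t \<and> has_sym_type u t)"

definition type_quot :: "sym_type \<Rightarrow> sym_type \<Rightarrow> sym_type" where
  "type_quot tau rho = (fst tau * fst rho, snd rho - snd tau)"

type_synonym lmat = "complex fls ^ 2 ^ 2"

definition laurent_mat :: "lmat \<Rightarrow> bool" where
  "laurent_mat M \<longleftrightarrow> (\<forall>j k. laurent_poly (M $ j $ k))"

definition sym_compatible_with :: "lmat \<Rightarrow> (2 \<Rightarrow> sym_type) \<Rightarrow> (2 \<Rightarrow> sym_type) \<Rightarrow> bool" where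
  "sym_compatible_with M tau rho \<longleftrightarrow>
     (\<forall>j. valid_type (tau j)) \<and> (\<forall>k. valid_type (rho k)) \<and>
     (\<forall>j k. has_sym_type (M $ j $ k) (type_quot (tau j) (rho k)))"

definition compatible_symmetry :: "lmat \<Rightarrow> bool" where
  "compatible_symmetry M \<longleftrightarrow> (\<exists>tau rho. sym_compatible_with M tau rho)"

definition compatible_product3 :: "lmat \<Rightarrow> lmat \<Rightarrow> lmat \<Rightarrow> bool" where
  "compatible_product3 P A Q \<longleftrightarrow>
     (\<exists>t0 t1 t2 t3. sym_compatible_with P t0 t1 \<and> sym_compatible_with A t1 t2 \<and>
                    sym_compatible_with Q t2 t3)"

definition is_monomial :: "complex fls \<Rightarrow> bool" where
  "is_monomial u \<longleftrightarrow> (\<exists>c m. c \<noteq> 0 \<and> (\<forall>k. fls_nth u k = (if k = m then c else 0)))"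

definition strongly_invertible :: "lmat \<Rightarrow> bool" where
  "strongly_invertible M \<longleftrightarrow> is_monomial (det M)"

definition diag2 :: "complex fls \<Rightarrow> complex fls \<Rightarrow> lmat" where
  "diag2 a b = (\<chi> i j. if i = j then (if i = 1 then a else b) else 0)"

definition poly_to_laurent :: "complex poly \<Rightarrow> complex fls" where
  "poly_to_laurent p = fps_to_fls (fps_of_poly p)"

text \<open>For a nonzero Laurent polynomial u, the polynomial z^(-s) u(z), s the lowest exponent.\<close>
definition laurent_to_poly :: "complex fls \<Rightarrow> complex poly" where
  "laurent_to_poly u =
     Poly (map (\<lambda>n. fls_nth u (fls_subdegree u + int n))
               [0..<Suc (nat (Max {k. fls_nth u k \<noteq> 0} - fls_subdegree u))])"

definition zero_mult :: "complex fls \<Rightarrow> complex \<Rightarrow> enat" where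
  "zero_mult u z0 = (if u = 0 then \<infinity> else enat (order z0 (laurent_to_poly u)))"

definition invariant_polys :: "lmat \<Rightarrow> complex poly \<Rightarrow> complex poly \<Rightarrow> bool" where
  "invariant_polys A d1 d2 \<longleftrightarrow>
     (d1 = 0 \<or> (lead_coeff d1 = 1 \<and> poly d1 0 \<noteq> 0)) \<and>
     (d2 = 0 \<or> (lead_coeff d2 = 1 \<and> poly d2 0 \<noteq> 0)) \<and>
     d1 dvd d2 \<and>
     (\<exists>E F. laurent_mat E \<and> laurent_mat F \<and> strongly_invertible E \<and> strongly_invertible F \<and>
            A = E ** diag2 (poly_to_laurent d1) (poly_to_laurent d2) ** F)"

end

theory Submission
  imports Defs
begin

text \<open>
  The matrix is diagonalised by a Euclidean algorithm on the width (highest minus lowest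
  exponent) of its entries, using only compatible strongly invertible elementary operations.
  A nonzero Laurent polynomial of type \<open>\<epsilon> z\<^sup>c\<close> with lowest exponent \<open>s\<close> has width \<open>c - 2s\<close>,
  so cancelling lowest coefficients lowers widths. A pivot \<open>a\<close> of minimal width cancels the
  lowest term of another entry \<open>b\<close> of its row by a symmetric multiplier, except when \<open>a\<close> and \<open>b\<close>
  have equal widths but their column types have opposite signs. Then, after a monomial shift
  aligns the lowest exponents, the two columns are multiplied by
  \<open>[[1 + z, 1 - z], [\<beta>(1 - z), \<beta>(1 + z)]]\<close>, whose determinant \<open>4\<beta>z\<close> is a monomial; the
  new first-row entries are not both zero and each is zero or narrower than \<open>a\<close>. Each step
  lowers the width of the pivot or the widths of the off-diagonal entries, so the process ends
  with a diagonal matrix.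

  For \<open>z\<^sub>0 \<noteq> 0\<close>, strongly invertible matrices are invertible over the Laurent polynomials and
  their determinants do not vanish at \<open>z\<^sub>0\<close>. Hence the least zero multiplicity of the entries
  and the multiplicity of the determinant are invariants; for a diagonal matrix they are the
  minimum and the sum of the multiplicities of the diagonal entries, which determine them as a
  multiset.
\<close>

notation fls_nth (infixl "$$" 75)

section \<open>Symmetric Laurent polynomials\<close>

definition laurent_monom :: "int \<Rightarrow> 'a::zero \<Rightarrow> 'a fls" where
  "laurent_monom k c = fls_shift (- k) (fls_const c)"

lemma laurent_monom_nth [simp]: "laurent_monom k c $$ n = (if n = k then c else 0)"
  by (simp add: laurent_monom_def)

lemma laurent_monom_eq_0_iff [simp]: "laurent_monom k c = 0 \<longleftrightarrow> c = 0"
  using laurent_monom_nth[of k c k] by (auto simp: fls_eq_iff)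

lemma fls_subdegree_laurent_monom [simp]: "c \<noteq> 0 \<Longrightarrow> fls_subdegree (laurent_monom k c) = k"
  by (auto intro: fls_subdegree_eqI)

lemma laurent_monom_times_nth [simp]:
  "(laurent_monom k c * u) $$ n = c * u $$ (n - k)" for u :: "'a::comm_ring_1 fls"
  by (simp add: laurent_monom_def fls_shifted_times_simps)

lemma times_laurent_monom_nth [simp]:
  "(u * laurent_monom k c) $$ n = c * u $$ (n - k)" for u :: "'a::comm_ring_1 fls"
  by (metis laurent_monom_times_nth mult.commute)

lemma laurent_monom_mult:
  "laurent_monom i a * laurent_monom j b = laurent_monom (i + j) (a * b :: 'a::comm_ring_1)"
  by (auto simp: fls_eq_iff)

lemma one_eq_laurent_monom: "1 = laurent_monom 0 (1::'a::comm_ring_1)"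
  by (auto simp: fls_eq_iff)

lemma is_monomial_iff: "is_monomial u \<longleftrightarrow> (\<exists>c m. c \<noteq> 0 \<and> u = laurent_monom m c)"
  unfolding is_monomial_def by (auto simp: fls_eq_iff)

lemma is_monomial_laurent_monom: "c \<noteq> 0 \<Longrightarrow> is_monomial (laurent_monom m c)"
  unfolding is_monomial_iff by auto

lemma is_monomial_mult: "is_monomial u \<Longrightarrow> is_monomial v \<Longrightarrow> is_monomial (u * v)"
  unfolding is_monomial_iff by (metis laurent_monom_mult mult_eq_0_iff)

lemma is_monomial_one: "is_monomial 1"
  by (simp add: one_eq_laurent_monom is_monomial_laurent_monom)

lemma is_monomial_minus_one: "is_monomial (- 1)"
proof -
  have "- 1 = laurent_monom 0 (- 1 :: complex)"
    by (auto simp: fls_eq_iff)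
  then show ?thesis
    by (simp add: is_monomial_laurent_monom)
qed

lemma has_sym_type_iff: "has_sym_type u (e, c) \<longleftrightarrow> (\<forall>k. u $$ k = e * u $$ (c - k))"
  by (simp add: has_sym_type_def)

lemma has_sym_type_support:
  assumes "has_sym_type u (e, c)" "u $$ k \<noteq> 0"
  shows "fls_subdegree u \<le> k" "k \<le> c - fls_subdegree u"
proof -
  show "fls_subdegree u \<le> k"
    using assms(2) by (rule fls_subdegree_leI)
  have "u $$ (c - k) \<noteq> 0"
    using assms unfolding has_sym_type_iff by (metis mult_zero_right)
  then show "k \<le> c - fls_subdegree u"
    using fls_subdegree_leI by fastforce
qed

lemma has_sym_type_imp_laurent_poly:
  assumes "has_sym_type u (e, c)"
  shows "laurent_poly u"
proof -
  have "{k. u $$ k \<noteq> 0} \<subseteq> {fls_subdegree u..c - fls_subdegree u}"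
    using has_sym_type_support[OF assms] by auto
  then show ?thesis
    unfolding laurent_poly_def by (rule finite_subset) simp
qed

lemma fls_times_nth_sym:
  assumes "has_sym_type f (e, c)"
  shows "(f * g) $$ n = (\<Sum>i = fls_subdegree f..c - fls_subdegree f. f $$ i * g $$ (n - i))"
proof -
  let ?s = "fls_subdegree f"
  let ?h = "\<lambda>i. f $$ i * g $$ (n - i)"
  have vanish: "f $$ i = 0" if "c - ?s < i" for i
    using has_sym_type_support(2)[OF assms, of i] that by fastforce
  have "(f * g) $$ n = (\<Sum>i = ?s..n - fls_subdegree g. ?h i)"
    by (rule fls_times_nth(2))
  also have "\<dots> = (\<Sum>i = ?s..min (c - ?s) (n - fls_subdegree g). ?h i)"
    by (rule sum.mono_neutral_right) (auto simp: vanish)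
  also have "\<dots> = (\<Sum>i = ?s..c - ?s. ?h i)"
    by (rule sum.mono_neutral_left) (auto simp: vanish)
  finally show ?thesis .
qed

lemma has_sym_type_mult:
  assumes f: "has_sym_type f (e, c)" and g: "has_sym_type g (d, c')"
  shows "has_sym_type (f * g) (e * d, c + c')"
  unfolding has_sym_type_iff
proof
  fix n
  let ?s = "fls_subdegree f"
  have "(f * g) $$ n = (\<Sum>i = ?s..c - ?s. f $$ i * g $$ (n - i))"
    by (rule fls_times_nth_sym[OF f])
  also have "\<dots> = (\<Sum>i = ?s..c - ?s. e * d * (f $$ (c - i) * g $$ (c + c' - n - (c - i))))"
  proof (rule sum.cong)
    fix i
    have "f $$ i = e * f $$ (c - i)" "g $$ (n - i) = d * g $$ (c' - (n - i))"
      using f g unfolding has_sym_type_iff by blast+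
    moreover have "c' - (n - i) = c + c' - n - (c - i)"
      by simp
    ultimately show "f $$ i * g $$ (n - i) = e * d * (f $$ (c - i) * g $$ (c + c' - n - (c - i)))"
      by (simp add: mult_ac)
  qed simp
  also have "\<dots> = e * d * (\<Sum>i = ?s..c - ?s. f $$ (c - i) * g $$ (c + c' - n - (c - i)))"
    by (simp add: sum_distrib_left)
  also have "\<dots> = e * d * (\<Sum>i = ?s..c - ?s. f $$ i * g $$ (c + c' - n - i))"
    by (intro arg_cong[where f = "(*) (e * d)"]
        sum.reindex_bij_witness[of _ "\<lambda>i. c - i" "\<lambda>i. c - i"]) auto
  also have "\<dots> = e * d * (f * g) $$ (c + c' - n)"
    by (simp only: fls_times_nth_sym[OF f])
  finally show "(f * g) $$ n = e * d * (f * g) $$ (c + c' - n)" .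
qed

lemma has_sym_type_add: "has_sym_type f t \<Longrightarrow> has_sym_type g t \<Longrightarrow> has_sym_type (f + g) t"
  unfolding has_sym_type_def by (metis distrib_left fls_plus_nth)

lemma has_sym_type_diff: "has_sym_type f t \<Longrightarrow> has_sym_type g t \<Longrightarrow> has_sym_type (f - g) t"
  unfolding has_sym_type_def by (metis right_diff_distrib fls_minus_nth)

lemma has_sym_type_uminus: "has_sym_type f t \<Longrightarrow> has_sym_type (- f) t"
  unfolding has_sym_type_def by (metis mult_minus_right fls_uminus_nth)

lemma has_sym_type_zero [simp]: "has_sym_type 0 t"
  by (simp add: has_sym_type_def)

lemma has_sym_type_laurent_monom: "has_sym_type (laurent_monom k a) (1, 2 * k)"
  by (auto simp: has_sym_type_def)

lemma has_sym_type_one: "has_sym_type 1 (1, 0)"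
  using has_sym_type_laurent_monom[of 0 1] by (simp add: one_eq_laurent_monom)

lemma has_sym_type_laurent_monom_pair:
  "valid_type (e, m) \<Longrightarrow> has_sym_type (laurent_monom k a + laurent_monom (m - k) (e * a)) (e, m)"
  by (auto simp: has_sym_type_def valid_type_def)

text \<open>The witness pairs \<open>\<alpha> z\<^sup>k\<close> with its mirror image \<open>\<epsilon> \<alpha> z\<^sup>m\<^sup>-\<^sup>k\<close>; for \<open>m = 2k\<close> the two
  terms coincide, which forces \<open>\<epsilon> = 1\<close>.\<close>

lemma exists_sym_with_lowest_term:
  assumes "valid_type (e, m)" "2 * k \<le> m" "2 * k = m \<Longrightarrow> e = 1" "\<alpha> \<noteq> 0"
  shows "\<exists>q. has_sym_type q (e, m) \<and> fls_subdegree q = k \<and> q $$ k = \<alpha>"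
proof (cases "2 * k < m")
  case True
  define q where "q = laurent_monom k \<alpha> + laurent_monom (m - k) (e * \<alpha>)"
  have "q $$ k = \<alpha>" "\<And>j. j < k \<Longrightarrow> q $$ j = 0"
    using True by (auto simp: q_def)
  moreover have "has_sym_type q (e, m)"
    unfolding q_def by (rule has_sym_type_laurent_monom_pair[OF assms(1)])
  ultimately show ?thesis
    using assms(4) by (intro exI[of _ q]) (auto intro: fls_subdegree_eqI)
next
  case False
  then show ?thesis
    using assms has_sym_type_laurent_monom[of k \<alpha>]
    by (intro exI[of _ "laurent_monom k \<alpha>"]) (auto intro: fls_subdegree_eqI simp: fls_eq_iff)
qed

text \<open>Only meaningful for \<open>u \<noteq> 0\<close>: the maximum of the empty support is unspecified.\<close>

definition laurent_width :: "complex fls \<Rightarrow> nat" where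
  "laurent_width u = nat (Max {k. u $$ k \<noteq> 0} - fls_subdegree u)"

lemma laurent_width_sym:
  assumes "has_sym_type u (e, c)" "u \<noteq> 0"
  shows "int (laurent_width u) = c - 2 * fls_subdegree u"
proof -
  let ?s = "fls_subdegree u"
  have "u $$ ?s \<noteq> 0"
    using assms(2) by simp
  then have "u $$ (c - ?s) \<noteq> 0" "?s \<le> c - ?s"
    using assms(1) has_sym_type_support[OF assms(1)] unfolding has_sym_type_iff
    by (metis mult_zero_right)+
  moreover have "finite {k. u $$ k \<noteq> 0}"
    using has_sym_type_imp_laurent_poly[OF assms(1)] by (simp add: laurent_poly_def)
  ultimately have "Max {k. u $$ k \<noteq> 0} = c - ?s"
    using has_sym_type_support[OF assms(1)] by (intro Max_eqI) auto
  with \<open>?s \<le> c - ?s\<close> show ?thesis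
    unfolding laurent_width_def by simp
qed

lemma laurent_width_sym_le:
  assumes "has_sym_type r (e, c)" "\<And>k. k \<le> s \<Longrightarrow> r $$ k = 0"
  shows "r = 0 \<or> int (laurent_width r) \<le> c - 2 * s - 2"
proof (cases "r = 0")
  case False
  moreover have "s + 1 \<le> fls_subdegree r"
    using assms(2) False by (intro fls_subdegree_geI) auto
  ultimately show ?thesis
    using laurent_width_sym[OF assms(1)] by simp
qed simp

lemma valid_type_quot: "valid_type t \<Longrightarrow> valid_type t' \<Longrightarrow> valid_type (type_quot t t')"
  by (auto simp: valid_type_def type_quot_def)

lemma type_quot_self: "valid_type t \<Longrightarrow> type_quot t t = (1, 0)"
  by (auto simp: valid_type_def type_quot_def)

lemma has_sym_type_mult_quot:
  assumes "valid_type \<sigma>" "has_sym_type u (type_quot \<tau> \<sigma>)" "has_sym_type v (type_quot \<sigma> \<rho>)"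
  shows "has_sym_type (u * v) (type_quot \<tau> \<rho>)"
proof -
  have "fst \<sigma> * fst \<sigma> = 1"
    using assms(1) by (auto simp: valid_type_def)
  then have sign: "fst \<tau> * fst \<sigma> * (fst \<sigma> * fst \<rho>) = fst \<tau> * fst \<rho>"
    by (metis mult.assoc mult.left_commute mult_1_right)
  have "has_sym_type (u * v) (fst \<tau> * fst \<sigma> * (fst \<sigma> * fst \<rho>), snd \<sigma> - snd \<tau> + (snd \<rho> - snd \<sigma>))"
    using has_sym_type_mult[OF assms(2,3)[unfolded type_quot_def]] .
  then show ?thesis
    unfolding sign type_quot_def by simp
qed


section \<open>Compatible matrices\<close>

definition mat2 :: "'a \<Rightarrow> 'a \<Rightarrow> 'a \<Rightarrow> 'a \<Rightarrow> 'a ^ 2 ^ 2" where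
  "mat2 a b c d = (\<chi> i j. if i = 1 then (if j = 1 then a else b) else (if j = 1 then c else d))"

lemma mat2_nth [simp]:
  "mat2 a b c d $ 1 $ 1 = a" "mat2 a b c d $ 1 $ 2 = b"
  "mat2 a b c d $ 2 $ 1 = c" "mat2 a b c d $ 2 $ 2 = d"
  by (simp_all add: mat2_def)

lemma mat2_eta: "A = mat2 (A $ 1 $ 1) (A $ 1 $ 2) (A $ 2 $ 1) (A $ 2 $ 2)"
  by (simp add: vec_eq_iff mat2_def forall_2)

lemma mat2_mult:
  "mat2 a b c d ** mat2 a' b' c' d' =
     mat2 (a * a' + b * c') (a * b' + b * d') (c * a' + d * c') (c * b' + d * d')"
  by (subst mat2_eta) (simp add: matrix_matrix_mult_def sum_2)

lemma matrix_mult_nth_2: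
  fixes X :: "'a::semiring_1 ^ 2 ^ 'm" and Y :: "'a ^ 'n ^ 2"
  shows "(X ** Y) $ j $ k = X $ j $ 1 * Y $ 1 $ k + X $ j $ 2 * Y $ 2 $ k"
  by (simp add: matrix_matrix_mult_def sum_2)

lemma det_mat2: "det (mat2 a b c d) = a * d - b * c"
  by (simp add: det_2)

lemma transpose_mat2: "transpose (mat2 a b c d) = mat2 a c b d"
  by (subst mat2_eta) (simp add: transpose_def)

lemma diag2_eq_mat2: "diag2 a b = mat2 a 0 0 b"
  by (subst mat2_eta) (simp add: diag2_def)

lemma mat_1_eq_mat2: "mat 1 = mat2 1 0 0 1"
  by (subst mat2_eta) (simp add: mat_def)

definition adjugate2 :: "'a::comm_ring_1 ^ 2 ^ 2 \<Rightarrow> 'a ^ 2 ^ 2" where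
  "adjugate2 X = mat2 (X $ 2 $ 2) (- X $ 1 $ 2) (- X $ 2 $ 1) (X $ 1 $ 1)"

lemma adjugate2_mult: "adjugate2 X ** X = mat2 (det X) 0 0 (det X)"
  by (subst (1 2 3) mat2_eta[of X]) (simp add: adjugate2_def mat2_mult det_mat2 algebra_simps)

lemma mult_adjugate2: "X ** adjugate2 X = mat2 (det X) 0 0 (det X)"
  by (subst (1 2 3) mat2_eta[of X]) (simp add: adjugate2_def mat2_mult det_mat2 algebra_simps)

lemma first_row_eq_0_if_mult_first_row_eq_0:
  fixes A R :: "'a::idom ^ 2 ^ 2"
  assumes "(A ** R) $ 1 $ 1 = 0" "(A ** R) $ 1 $ 2 = 0" "det R \<noteq> 0"
  shows "A $ 1 $ 1 = 0"
proof -
  have "A $ 1 $ 1 * det R = (A ** mat2 (det R) 0 0 (det R)) $ 1 $ 1"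
    by (simp add: matrix_mult_nth_2)
  also have "\<dots> = ((A ** R) ** adjugate2 R) $ 1 $ 1"
    by (simp add: mult_adjugate2 matrix_mul_assoc[symmetric])
  also have "\<dots> = 0"
    using assms(1,2) by (simp add: matrix_mult_nth_2 adjugate2_def)
  finally show ?thesis
    using assms(3) by simp
qed

lemma sym_compatible_with_mat2:
  "sym_compatible_with (mat2 a b c d) \<tau> \<rho> \<longleftrightarrow>
     valid_type (\<tau> 1) \<and> valid_type (\<tau> 2) \<and> valid_type (\<rho> 1) \<and> valid_type (\<rho> 2) \<and>
     has_sym_type a (type_quot (\<tau> 1) (\<rho> 1)) \<and> has_sym_type b (type_quot (\<tau> 1) (\<rho> 2)) \<and>
     has_sym_type c (type_quot (\<tau> 2) (\<rho> 1)) \<and> has_sym_type d (type_quot (\<tau> 2) (\<rho> 2))"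
  unfolding sym_compatible_with_def forall_2 by auto

lemma sym_compatible_with_valid:
  "sym_compatible_with A \<tau> \<rho> \<Longrightarrow> valid_type (\<tau> i) \<and> valid_type (\<rho> i)"
  by (simp add: sym_compatible_with_def)

lemma sym_compatible_with_mult:
  assumes "sym_compatible_with X \<tau> \<sigma>" "sym_compatible_with Y \<sigma> \<rho>"
  shows "sym_compatible_with (X ** Y) \<tau> \<rho>"
  unfolding sym_compatible_with_def
proof (intro conjI allI)
  fix j k
  have "has_sym_type (X $ j $ i * Y $ i $ k) (type_quot (\<tau> j) (\<rho> k))" for i
    using assms
    by (intro has_sym_type_mult_quot[where \<sigma> = "\<sigma> i"]) (auto simp: sym_compatible_with_def)
  then show "has_sym_type ((X ** Y) $ j $ k) (type_quot (\<tau> j) (\<rho> k))"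
    by (simp add: matrix_mult_nth_2 has_sym_type_add)
qed (use assms in \<open>auto simp: sym_compatible_with_def\<close>)

definition type_inverse :: "sym_type \<Rightarrow> sym_type" where
  "type_inverse t = (fst t, - snd t)"

lemma sym_compatible_with_transpose:
  "sym_compatible_with A \<tau> \<rho> \<Longrightarrow>
     sym_compatible_with (transpose A) (type_inverse \<circ> \<rho>) (type_inverse \<circ> \<tau>)"
  unfolding sym_compatible_with_def type_inverse_def transpose_def
  by (auto simp: valid_type_def type_quot_def mult.commute)

lemma sym_compatible_imp_laurent_mat:
  assumes "sym_compatible_with M \<tau> \<rho>"
  shows "laurent_mat M"
  unfolding laurent_mat_def
proof (intro allI)
  fix j k
  have "has_sym_type (M $ j $ k) (fst (type_quot (\<tau> j) (\<rho> k)), snd (type_quot (\<tau> j) (\<rho> k)))"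
    using assms by (simp add: sym_compatible_with_def)
  then show "laurent_poly (M $ j $ k)"
    by (rule has_sym_type_imp_laurent_poly)
qed

definition sym_unimodular :: "lmat \<Rightarrow> (2 \<Rightarrow> sym_type) \<Rightarrow> (2 \<Rightarrow> sym_type) \<Rightarrow> bool" where
  "sym_unimodular P \<tau> \<rho> \<longleftrightarrow> sym_compatible_with P \<tau> \<rho> \<and> strongly_invertible P"

lemma sym_unimodular_mult:
  "sym_unimodular P \<tau> \<sigma> \<Longrightarrow> sym_unimodular Q \<sigma> \<rho> \<Longrightarrow> sym_unimodular (P ** Q) \<tau> \<rho>"
  unfolding sym_unimodular_def strongly_invertible_def
  by (auto simp: det_mul intro: sym_compatible_with_mult is_monomial_mult)

lemma sym_unimodular_one:
  assumes "\<And>i. valid_type (\<tau> i)"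
  shows "sym_unimodular (mat 1) \<tau> \<tau>"
  unfolding sym_unimodular_def strongly_invertible_def mat_1_eq_mat2 det_mat2
    sym_compatible_with_mat2
  using assms by (simp add: type_quot_self has_sym_type_one is_monomial_one)

lemma sym_unimodular_transpose:
  "sym_unimodular P \<tau> \<rho> \<Longrightarrow> sym_unimodular (transpose P) (type_inverse \<circ> \<rho>) (type_inverse \<circ> \<tau>)"
  unfolding sym_unimodular_def strongly_invertible_def
  by (simp add: sym_compatible_with_transpose det_transpose)

definition sym_equiv ::
  "lmat \<Rightarrow> (2 \<Rightarrow> sym_type) \<Rightarrow> (2 \<Rightarrow> sym_type) \<Rightarrow> lmat \<Rightarrow> (2 \<Rightarrow> sym_type) \<Rightarrow> (2 \<Rightarrow> sym_type) \<Rightarrow> bool"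
  where "sym_equiv A \<tau> \<rho> B \<tau>' \<rho>' \<longleftrightarrow>
    (\<exists>P Q. sym_unimodular P \<tau>' \<tau> \<and> sym_unimodular Q \<rho> \<rho>' \<and> B = P ** A ** Q)"

lemma sym_equiv_refl: "sym_compatible_with A \<tau> \<rho> \<Longrightarrow> sym_equiv A \<tau> \<rho> A \<tau> \<rho>"
  unfolding sym_equiv_def
  by (metis matrix_mul_lid matrix_mul_rid sym_compatible_with_valid sym_unimodular_one)

lemma sym_equiv_trans:
  assumes "sym_equiv A \<tau> \<rho> B \<tau>' \<rho>'" "sym_equiv B \<tau>' \<rho>' C \<tau>'' \<rho>''"
  shows "sym_equiv A \<tau> \<rho> C \<tau>'' \<rho>''"
proof -
  obtain P Q P' Q' where "sym_unimodular P \<tau>' \<tau>" "sym_unimodular Q \<rho> \<rho>'" "B = P ** A ** Q"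
    "sym_unimodular P' \<tau>'' \<tau>'" "sym_unimodular Q' \<rho>' \<rho>''" "C = P' ** B ** Q'"
    using assms unfolding sym_equiv_def by blast
  then show ?thesis
    unfolding sym_equiv_def
    by (intro exI[of _ "P' ** P"] exI[of _ "Q ** Q'"])
      (auto intro: sym_unimodular_mult simp: matrix_mul_assoc)
qed

lemma sym_equiv_compatible:
  "sym_equiv A \<tau> \<rho> B \<tau>' \<rho>' \<Longrightarrow> sym_compatible_with A \<tau> \<rho> \<Longrightarrow> sym_compatible_with B \<tau>' \<rho>'"
  unfolding sym_equiv_def sym_unimodular_def by (auto intro!: sym_compatible_with_mult)

lemma sym_equiv_mult_left:
  "sym_compatible_with A \<tau> \<rho> \<Longrightarrow> sym_unimodular P \<tau>' \<tau> \<Longrightarrow> sym_equiv A \<tau> \<rho> (P ** A) \<tau>' \<rho>"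
  unfolding sym_equiv_def
  by (metis matrix_mul_rid sym_compatible_with_valid sym_unimodular_one)

lemma sym_equiv_mult_right:
  "sym_compatible_with A \<tau> \<rho> \<Longrightarrow> sym_unimodular Q \<rho> \<rho>' \<Longrightarrow> sym_equiv A \<tau> \<rho> (A ** Q) \<tau> \<rho>'"
  unfolding sym_equiv_def
  by (metis matrix_mul_lid sym_compatible_with_valid sym_unimodular_one)

lemma sym_equiv_transpose:
  assumes "sym_equiv A \<tau> \<rho> B \<tau>' \<rho>'"
  shows "sym_equiv (transpose A) (type_inverse \<circ> \<rho>) (type_inverse \<circ> \<tau>)
           (transpose B) (type_inverse \<circ> \<rho>') (type_inverse \<circ> \<tau>')"
proof -
  obtain P Q where "sym_unimodular P \<tau>' \<tau>" "sym_unimodular Q \<rho> \<rho>'" "B = P ** A ** Q"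
    using assms unfolding sym_equiv_def by blast
  then show ?thesis
    unfolding sym_equiv_def
    by (intro exI[of _ "transpose Q"] exI[of _ "transpose P"])
      (auto intro: sym_unimodular_transpose simp: matrix_transpose_mul matrix_mul_assoc)
qed

definition swap_types :: "(2 \<Rightarrow> sym_type) \<Rightarrow> 2 \<Rightarrow> sym_type" where
  "swap_types \<tau> i = (if i = 1 then \<tau> 2 else \<tau> 1)"

lemma sym_unimodular_swap:
  assumes "\<And>i. valid_type (\<tau> i)"
  shows "sym_unimodular (mat2 0 1 1 0) \<tau> (swap_types \<tau>)"
    and "sym_unimodular (mat2 0 1 1 0) (swap_types \<tau>) \<tau>"
  unfolding sym_unimodular_def strongly_invertible_def det_mat2 sym_compatible_with_mat2
    swap_types_def
  using assms by (simp_all add: type_quot_self has_sym_type_one is_monomial_minus_one)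

lemma sym_equiv_swap_columns:
  assumes "sym_compatible_with (mat2 a b c d) \<tau> \<rho>"
  shows "sym_equiv (mat2 a b c d) \<tau> \<rho> (mat2 b a d c) \<tau> (swap_types \<rho>)"
  using sym_equiv_mult_right[OF assms sym_unimodular_swap(1)] sym_compatible_with_valid[OF assms]
  by (simp add: mat2_mult)

lemma sym_equiv_swap_rows:
  assumes "sym_compatible_with (mat2 a b c d) \<tau> \<rho>"
  shows "sym_equiv (mat2 a b c d) \<tau> \<rho> (mat2 c d a b) (swap_types \<tau>) \<rho>"
  using sym_equiv_mult_left[OF assms sym_unimodular_swap(2)] sym_compatible_with_valid[OF assms]
  by (simp add: mat2_mult)

lemma sym_equiv_column_reduce:
  assumes "sym_compatible_with (mat2 a b c d) \<tau> \<rho>" "has_sym_type q (type_quot (\<rho> 1) (\<rho> 2))"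
  shows "sym_equiv (mat2 a b c d) \<tau> \<rho> (mat2 a (b - q * a) c (d - q * c)) \<tau> \<rho>"
proof -
  have "sym_unimodular (mat2 1 (- q) 0 1) \<rho> \<rho>"
    unfolding sym_unimodular_def strongly_invertible_def sym_compatible_with_mat2 det_mat2
    using sym_compatible_with_valid[OF assms(1)] assms(2)
    by (simp add: type_quot_self has_sym_type_one is_monomial_one has_sym_type_uminus)
  from sym_equiv_mult_right[OF assms(1) this] show ?thesis
    by (simp add: mat2_mult algebra_simps)
qed

lemma sym_equiv_column_shift:
  assumes "sym_compatible_with (mat2 a b c d) \<tau> \<rho>"
  shows "sym_equiv (mat2 a b c d) \<tau> \<rho>
           (mat2 a (b * laurent_monom k 1) c (d * laurent_monom k 1)) \<tau>
           (\<rho>(2 := (fst (\<rho> 2), snd (\<rho> 2) + 2 * k)))"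
proof -
  have "valid_type (\<rho> 1)" "valid_type (\<rho> 2)"
    using sym_compatible_with_valid[OF assms] by auto
  then have "sym_unimodular (mat2 1 0 0 (laurent_monom k 1)) \<rho>
      (\<rho>(2 := (fst (\<rho> 2), snd (\<rho> 2) + 2 * k)))"
    unfolding sym_unimodular_def strongly_invertible_def sym_compatible_with_mat2 det_mat2
    by (auto simp: type_quot_self has_sym_type_one has_sym_type_laurent_monom
        is_monomial_laurent_monom valid_type_def type_quot_def)
  from sym_equiv_mult_right[OF assms this] show ?thesis
    by (simp add: mat2_mult)
qed

definition rotation_mat :: "complex \<Rightarrow> lmat" where
  "rotation_mat \<beta> =
     mat2 (laurent_monom 0 1 + laurent_monom 1 1) (laurent_monom 0 1 + laurent_monom 1 (- 1))
          (laurent_monom 0 \<beta> + laurent_monom 1 (- \<beta>)) (laurent_monom 0 \<beta> + laurent_monom 1 \<beta>)"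

lemma det_rotation_mat: "det (rotation_mat \<beta>) = laurent_monom 1 (4 * \<beta>)"
  unfolding rotation_mat_def det_mat2 by (simp add: fls_eq_iff algebra_simps)

lemma sym_unimodular_rotation_mat:
  assumes "valid_type (\<rho> 1)" "valid_type (\<rho> 2)" "fst (\<rho> 2) = - fst (\<rho> 1)" "snd (\<rho> 2) = snd (\<rho> 1)"
    and "\<beta> \<noteq> 0"
  shows "sym_unimodular (rotation_mat \<beta>) \<rho> (\<lambda>i. (fst (\<rho> i), snd (\<rho> 1) + 1))"
proof -
  have pair: "has_sym_type (laurent_monom 0 c + laurent_monom 1 (e * c)) (e, 1)"
    if "e = 1 \<or> e = -1" for c e
    using has_sym_type_laurent_monom_pair[of e 1 0 c] that by (simp add: valid_type_def)
  have "has_sym_type (laurent_monom 0 1 + laurent_monom 1 1) (1, 1)"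
    "has_sym_type (laurent_monom 0 1 + laurent_monom 1 (- 1)) (- 1, 1)"
    "has_sym_type (laurent_monom 0 \<beta> + laurent_monom 1 (- \<beta>)) (- 1, 1)"
    "has_sym_type (laurent_monom 0 \<beta> + laurent_monom 1 \<beta>) (1, 1)"
    using pair[of 1 1] pair[of "- 1" 1] pair[of "- 1" \<beta>] pair[of 1 \<beta>] by simp_all
  moreover have "strongly_invertible (rotation_mat \<beta>)"
    unfolding strongly_invertible_def det_rotation_mat
    using assms(5) by (simp add: is_monomial_laurent_monom)
  ultimately show ?thesis
    unfolding sym_unimodular_def sym_compatible_with_mat2 rotation_mat_def
    using assms by (auto simp: valid_type_def type_quot_def)
qed

section \<open>Diagonalization\<close>

lemma fls_times_nth_upto_subdegree:
  fixes q a b :: "'a::comm_ring_1 fls"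
  assumes "fls_subdegree q + fls_subdegree a = fls_subdegree b"
    and "q $$ fls_subdegree q * a $$ fls_subdegree a = b $$ fls_subdegree b"
    and "k \<le> fls_subdegree b"
  shows "(q * a) $$ k = b $$ k"
proof (cases "k = fls_subdegree b")
  case True
  then show ?thesis
    using assms(2) fls_times_base[of q a] by (simp add: assms(1))
qed (use assms in \<open>simp add: fls_times_nth_eq0\<close>)

lemma sym_division:
  assumes "valid_type \<sigma>" "valid_type \<rho>"
    and a: "has_sym_type a (type_quot \<tau> \<sigma>)" and b: "has_sym_type b (type_quot \<tau> \<rho>)"
    and "a \<noteq> 0" "b \<noteq> 0" "laurent_width a \<le> laurent_width b"
    and "laurent_width a = laurent_width b \<Longrightarrow> fst \<sigma> = fst \<rho>"
  shows "\<exists>q. has_sym_type q (type_quot \<sigma> \<rho>) \<and>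
           (b - q * a = 0 \<or> laurent_width (b - q * a) < laurent_width b)"
proof -
  define sa sb where "sa = fls_subdegree a" and "sb = fls_subdegree b"
  have wa: "int (laurent_width a) = snd \<sigma> - snd \<tau> - 2 * sa"
    using laurent_width_sym[OF a[unfolded type_quot_def] \<open>a \<noteq> 0\<close>] by (simp add: sa_def)
  have wb: "int (laurent_width b) = snd \<rho> - snd \<tau> - 2 * sb"
    using laurent_width_sym[OF b[unfolded type_quot_def] \<open>b \<noteq> 0\<close>] by (simp add: sb_def)
  have "fst \<sigma> * fst \<rho> = 1" if "2 * (sb - sa) = snd \<rho> - snd \<sigma>"
    using that wa wb assms(1,2,8) by (auto simp: valid_type_def)
  moreover have "valid_type (fst \<sigma> * fst \<rho>, snd \<rho> - snd \<sigma>)"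
    using valid_type_quot[OF assms(1,2)] by (simp add: type_quot_def)
  moreover have "b $$ sb / a $$ sa \<noteq> 0"
    using \<open>a \<noteq> 0\<close> \<open>b \<noteq> 0\<close> by (simp add: sa_def sb_def)
  ultimately obtain q where q: "has_sym_type q (type_quot \<sigma> \<rho>)"
      "fls_subdegree q = sb - sa" "q $$ (sb - sa) = b $$ sb / a $$ sa"
    using exists_sym_with_lowest_term[of "fst \<sigma> * fst \<rho>" "snd \<rho> - snd \<sigma>" "sb - sa"
        "b $$ sb / a $$ sa"] wa wb assms(7)
    by (auto simp: type_quot_def)
  have "has_sym_type (b - q * a) (type_quot \<tau> \<rho>)"
    using has_sym_type_mult_quot[OF assms(1) a q(1)] b by (simp add: has_sym_type_diff mult.commute)
  moreover have "(b - q * a) $$ k = 0" if "k \<le> sb" for k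
    using fls_times_nth_upto_subdegree[of q a b k] that q(2,3) \<open>a \<noteq> 0\<close> by (simp add: sa_def sb_def)
  ultimately have "b - q * a = 0 \<or> int (laurent_width (b - q * a)) \<le> snd \<rho> - snd \<tau> - 2 * sb - 2"
    using laurent_width_sym_le[of "b - q * a"] by (simp add: type_quot_def)
  then show ?thesis
    using q(1) wb by auto
qed

text \<open>Multiplying the row \<open>(a, b)\<close> by \<open>rotation_mat \<beta>\<close> gives the two instances \<open>\<sigma> = \<plusminus>1\<close>
  of \<open>x\<close> below.\<close>

lemma sym_rotation_width_less:
  assumes a: "has_sym_type a (e, c)" and b: "has_sym_type b (- e, c)" and "\<sigma> = 1 \<or> \<sigma> = -1"
    and "a \<noteq> 0" "\<And>k. k < fls_subdegree a \<Longrightarrow> b $$ k = 0"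
    and "a $$ fls_subdegree a + \<beta> * b $$ fls_subdegree a = 0"
  defines "x \<equiv> a * (laurent_monom 0 1 + laurent_monom 1 \<sigma>) +
                 b * (laurent_monom 0 \<beta> + laurent_monom 1 (- \<sigma> * \<beta>))"
  shows "x = 0 \<or> laurent_width x < laurent_width a"
proof -
  let ?s = "fls_subdegree a"
  have "has_sym_type (laurent_monom 0 1 + laurent_monom 1 \<sigma>) (\<sigma>, 1)"
    "has_sym_type (laurent_monom 0 \<beta> + laurent_monom 1 (- \<sigma> * \<beta>)) (- \<sigma>, 1)"
    using has_sym_type_laurent_monom_pair[of \<sigma> 1 0 1]
      has_sym_type_laurent_monom_pair[of "- \<sigma>" 1 0 \<beta>] assms(3)
    by (auto simp: valid_type_def)
  then have "has_sym_type x (e * \<sigma>, c + 1)"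
    unfolding x_def using has_sym_type_mult[OF a] has_sym_type_mult[OF b]
    by (metis has_sym_type_add mult_minus_left minus_mult_minus)
  moreover have "x $$ k = 0" if "k \<le> ?s" for k
    using that assms(5,6) by (cases "k = ?s") (auto simp: x_def algebra_simps)
  ultimately have "x = 0 \<or> int (laurent_width x) \<le> c + 1 - 2 * ?s - 2"
    by (rule laurent_width_sym_le)
  then show ?thesis
    using laurent_width_sym[OF a \<open>a \<noteq> 0\<close>] by auto
qed

definition pivot_minimal :: "lmat \<Rightarrow> bool" where
  "pivot_minimal A \<longleftrightarrow> A $ 1 $ 1 \<noteq> 0 \<and>
     (\<forall>j k. A $ j $ k \<noteq> 0 \<longrightarrow> laurent_width (A $ 1 $ 1) \<le> laurent_width (A $ j $ k))"

definition offdiag_size :: "lmat \<Rightarrow> nat" where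
  "offdiag_size A =
     (if A $ 1 $ 2 = 0 then 0 else laurent_width (A $ 1 $ 2) + 1) +
     (if A $ 2 $ 1 = 0 then 0 else laurent_width (A $ 2 $ 1) + 1)"

definition pivot_order :: "(lmat \<times> lmat) set" where
  "pivot_order = measures [\<lambda>A. laurent_width (A $ 1 $ 1), offdiag_size]"

lemma wf_pivot_order: "wf pivot_order"
  by (simp add: pivot_order_def)

lemma pivot_minimal_mat2:
  "pivot_minimal (mat2 a b c d) \<longleftrightarrow> a \<noteq> 0 \<and> (b \<noteq> 0 \<longrightarrow> laurent_width a \<le> laurent_width b) \<and>
     (c \<noteq> 0 \<longrightarrow> laurent_width a \<le> laurent_width c) \<and> (d \<noteq> 0 \<longrightarrow> laurent_width a \<le> laurent_width d)"
  unfolding pivot_minimal_def forall_2 by auto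

lemma pivot_minimal_transpose: "pivot_minimal (transpose A) \<longleftrightarrow> pivot_minimal A"
  by (subst (1 2) mat2_eta) (auto simp: transpose_mat2 pivot_minimal_mat2)

lemma offdiag_size_transpose: "offdiag_size (transpose A) = offdiag_size A"
  by (simp add: offdiag_size_def transpose_def add.commute)

lemma pivot_order_transpose: "(transpose B, transpose A) \<in> pivot_order \<longleftrightarrow> (B, A) \<in> pivot_order"
  by (simp add: pivot_order_def offdiag_size_transpose) (simp add: transpose_def)

lemma sym_equiv_entry_to_pivot:
  assumes C: "sym_compatible_with (mat2 a b c d) \<tau> \<rho>" and "e \<in> {a, b, c, d}"
  shows "\<exists>x y z \<tau>' \<rho>'. sym_equiv (mat2 a b c d) \<tau> \<rho> (mat2 e x y z) \<tau>' \<rho>' \<and> {x, y, z} \<subseteq> {a, b, c, d}"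
proof -
  have "sym_equiv (mat2 a b c d) \<tau> \<rho> (mat2 d c b a) (swap_types \<tau>) (swap_types \<rho>)"
    by (rule sym_equiv_trans[OF sym_equiv_swap_rows[OF C]
          sym_equiv_swap_columns[OF sym_equiv_compatible[OF sym_equiv_swap_rows[OF C] C]]])
  then show ?thesis
    using assms(2) sym_equiv_refl[OF C] sym_equiv_swap_columns[OF C] sym_equiv_swap_rows[OF C]
    by (elim insertE) blast+
qed

lemma exists_pivot_minimal:
  fixes A :: lmat
  assumes C: "sym_compatible_with A \<tau> \<rho>" and "A $ j $ k \<noteq> 0"
  shows "\<exists>B \<tau>' \<rho>'. sym_equiv A \<tau> \<rho> B \<tau>' \<rho>' \<and> pivot_minimal B \<and>
           laurent_width (B $ 1 $ 1) \<le> laurent_width (A $ j $ k)"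
proof -
  obtain a b c d where A: "A = mat2 a b c d"
    using mat2_eta by blast
  let ?S = "{x \<in> {a, b, c, d}. x \<noteq> 0}"
  have "A $ j $ k \<in> ?S"
    using assms(2) exhaust_2[of j] exhaust_2[of k] by (auto simp: A)
  then obtain e where e: "e \<in> ?S" and min: "\<And>x. x \<in> ?S \<Longrightarrow> laurent_width e \<le> laurent_width x"
    using ex_has_least_nat[of "\<lambda>x. x \<in> ?S" _ laurent_width] by blast
  have le: "laurent_width e \<le> laurent_width w" if "w \<in> {a, b, c, d}" "w \<noteq> 0" for w
    using min that by blast
  obtain x y z \<tau>' \<rho>' where R: "sym_equiv A \<tau> \<rho> (mat2 e x y z) \<tau>' \<rho>'"
    and xyz: "{x, y, z} \<subseteq> {a, b, c, d}"
    using sym_equiv_entry_to_pivot[OF C[unfolded A], of e] e unfolding A by blast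
  from xyz have entries: "x \<in> {a, b, c, d}" "y \<in> {a, b, c, d}" "z \<in> {a, b, c, d}"
    by auto
  have "pivot_minimal (mat2 e x y z)"
    using le[OF entries(1)] le[OF entries(2)] le[OF entries(3)] e by (simp add: pivot_minimal_mat2)
  moreover have "laurent_width (mat2 e x y z $ 1 $ 1) \<le> laurent_width (A $ j $ k)"
    using min \<open>A $ j $ k \<in> ?S\<close> by simp
  ultimately show ?thesis
    using R by blast
qed

lemma pivot_row_division_step:
  assumes C: "sym_compatible_with (mat2 a b c d) \<tau> \<rho>" and N: "pivot_minimal (mat2 a b c d)"
    and "b \<noteq> 0" and "laurent_width a < laurent_width b \<or> fst (\<rho> 1) = fst (\<rho> 2)"
  shows "\<exists>B \<tau>' \<rho>'. sym_equiv (mat2 a b c d) \<tau> \<rho> B \<tau>' \<rho>' \<and>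
    (pivot_minimal B \<and> B $ 1 $ 1 = a \<and> offdiag_size B < offdiag_size (mat2 a b c d) \<or>
     (\<exists>j k. B $ j $ k \<noteq> 0 \<and> laurent_width (B $ j $ k) < laurent_width a))"
proof -
  have "\<exists>q. has_sym_type q (type_quot (\<rho> 1) (\<rho> 2)) \<and>
      (b - q * a = 0 \<or> laurent_width (b - q * a) < laurent_width b)"
    by (rule sym_division)
      (use C N \<open>b \<noteq> 0\<close> assms(4) in \<open>auto simp: sym_compatible_with_mat2 pivot_minimal_mat2\<close>)
  then obtain q where q: "has_sym_type q (type_quot (\<rho> 1) (\<rho> 2))"
    and smaller: "b - q * a = 0 \<or> laurent_width (b - q * a) < laurent_width b"
    by blast
  define B where "B = mat2 a (b - q * a) c (d - q * c)"
  have "sym_equiv (mat2 a b c d) \<tau> \<rho> B \<tau> \<rho>"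
    unfolding B_def by (rule sym_equiv_column_reduce[OF C q])
  moreover have "pivot_minimal B \<and> B $ 1 $ 1 = a \<and> offdiag_size B < offdiag_size (mat2 a b c d) \<or>
     (\<exists>j k. B $ j $ k \<noteq> 0 \<and> laurent_width (B $ j $ k) < laurent_width a)"
  proof (rule disjCI)
    assume "\<nexists>j k. B $ j $ k \<noteq> 0 \<and> laurent_width (B $ j $ k) < laurent_width a"
    then have "\<not> (B $ j $ k \<noteq> 0 \<and> laurent_width (B $ j $ k) < laurent_width a)" for j k
      by blast
    from this[of 1 2] this[of 2 1] this[of 2 2] have "pivot_minimal B"
      using N by (auto simp: B_def pivot_minimal_mat2)
    moreover have "offdiag_size B < offdiag_size (mat2 a b c d)"
      using smaller \<open>b \<noteq> 0\<close> by (auto simp: B_def offdiag_size_def)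
    ultimately show "pivot_minimal B \<and> B $ 1 $ 1 = a \<and> offdiag_size B < offdiag_size (mat2 a b c d)"
      by (simp add: B_def)
  qed
  ultimately show ?thesis
    by blast
qed

lemma pivot_row_align_step:
  assumes C: "sym_compatible_with (mat2 a b c d) \<tau> \<rho>" and "a \<noteq> 0" "b \<noteq> 0"
    and "laurent_width a = laurent_width b"
  shows "\<exists>b' d'. sym_equiv (mat2 a b c d) \<tau> \<rho> (mat2 a b' c d') \<tau> (\<rho>(2 := (fst (\<rho> 2), snd (\<rho> 1)))) \<and>
           b' \<noteq> 0 \<and> fls_subdegree b' = fls_subdegree a"
proof -
  define k where "k = fls_subdegree a - fls_subdegree b"
  have "has_sym_type a (fst (\<tau> 1) * fst (\<rho> 1), snd (\<rho> 1) - snd (\<tau> 1))"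
    "has_sym_type b (fst (\<tau> 1) * fst (\<rho> 2), snd (\<rho> 2) - snd (\<tau> 1))"
    using C by (simp_all add: sym_compatible_with_mat2 type_quot_def)
  from laurent_width_sym[OF this(1) \<open>a \<noteq> 0\<close>] laurent_width_sym[OF this(2) \<open>b \<noteq> 0\<close>]
  have "snd (\<rho> 2) + 2 * k = snd (\<rho> 1)"
    using assms(4) by (simp add: k_def)
  then have "sym_equiv (mat2 a b c d) \<tau> \<rho>
      (mat2 a (b * laurent_monom k 1) c (d * laurent_monom k 1)) \<tau>
      (\<rho>(2 := (fst (\<rho> 2), snd (\<rho> 1))))"
    using sym_equiv_column_shift[OF C, of k] by simp
  moreover have "b * laurent_monom k 1 \<noteq> 0"
    and "fls_subdegree (b * laurent_monom k 1) = fls_subdegree a"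
    using \<open>b \<noteq> 0\<close> by (simp_all add: k_def)
  ultimately show ?thesis
    by blast
qed

lemma pivot_row_rotation_step:
  assumes C: "sym_compatible_with (mat2 a b c d) \<tau> \<rho>" and "a \<noteq> 0" "b \<noteq> 0"
    and "fls_subdegree b = fls_subdegree a" "fst (\<rho> 2) = - fst (\<rho> 1)" "snd (\<rho> 2) = snd (\<rho> 1)"
  shows "\<exists>B \<tau>' \<rho>'. sym_equiv (mat2 a b c d) \<tau> \<rho> B \<tau>' \<rho>' \<and>
           (\<exists>j k. B $ j $ k \<noteq> 0 \<and> laurent_width (B $ j $ k) < laurent_width a)"
proof -
  define s where "s = fls_subdegree a"
  define \<beta> where "\<beta> = - a $$ s / b $$ s"
  have "\<beta> \<noteq> 0"
    using \<open>a \<noteq> 0\<close> nth_fls_subdegree_nonzero[OF \<open>b \<noteq> 0\<close>] assms(4) by (simp add: \<beta>_def s_def)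
  define B where "B = mat2 a b c d ** rotation_mat \<beta>"
  have "sym_equiv (mat2 a b c d) \<tau> \<rho> B \<tau> (\<lambda>i. (fst (\<rho> i), snd (\<rho> 1) + 1))"
    unfolding B_def using C assms(5,6) \<open>\<beta> \<noteq> 0\<close>
    by (intro sym_equiv_mult_right sym_unimodular_rotation_mat)
      (simp_all add: sym_compatible_with_mat2)
  moreover have "B $ 1 $ j = 0 \<or> laurent_width (B $ 1 $ j) < laurent_width a" for j
  proof -
    define e where "e = fst (type_quot (\<tau> 1) (\<rho> 1))"
    have types: "has_sym_type a (e, snd (type_quot (\<tau> 1) (\<rho> 1)))"
      "has_sym_type b (- e, snd (type_quot (\<tau> 1) (\<rho> 1)))"
      using C assms(5,6) by (simp_all add: sym_compatible_with_mat2 e_def type_quot_def)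
    have lowest: "a $$ s + \<beta> * b $$ s = 0" "\<And>k. k < s \<Longrightarrow> b $$ k = 0"
      using nth_fls_subdegree_nonzero[OF \<open>b \<noteq> 0\<close>] assms(4) by (auto simp: \<beta>_def s_def)
    show ?thesis
      using sym_rotation_width_less[OF types, of 1 \<beta>] sym_rotation_width_less[OF types, of "- 1" \<beta>]
        lowest \<open>a \<noteq> 0\<close> exhaust_2[of j]
      by (auto simp: B_def rotation_mat_def mat2_mult s_def)
  qed
  moreover have "B $ 1 $ 1 \<noteq> 0 \<or> B $ 1 $ 2 \<noteq> 0"
    using first_row_eq_0_if_mult_first_row_eq_0[of "mat2 a b c d" "rotation_mat \<beta>"] \<open>a \<noteq> 0\<close> \<open>\<beta> \<noteq> 0\<close>
    by (auto simp: B_def det_rotation_mat)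
  ultimately show ?thesis
    by blast
qed

lemma pivot_row_step:
  assumes C: "sym_compatible_with (mat2 a b c d) \<tau> \<rho>" and N: "pivot_minimal (mat2 a b c d)"
    and "b \<noteq> 0"
  shows "\<exists>B \<tau>' \<rho>'. sym_equiv (mat2 a b c d) \<tau> \<rho> B \<tau>' \<rho>' \<and>
    (pivot_minimal B \<and> B $ 1 $ 1 = a \<and> offdiag_size B < offdiag_size (mat2 a b c d) \<or>
     (\<exists>j k. B $ j $ k \<noteq> 0 \<and> laurent_width (B $ j $ k) < laurent_width a))"
proof (cases "laurent_width a < laurent_width b \<or> fst (\<rho> 1) = fst (\<rho> 2)")
  case True
  then show ?thesis
    using pivot_row_division_step[OF C N \<open>b \<noteq> 0\<close>] by blast
next
  case False
  moreover have "valid_type (\<rho> 1)" "valid_type (\<rho> 2)"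
    using C by (simp_all add: sym_compatible_with_mat2)
  ultimately have "laurent_width a = laurent_width b" "fst (\<rho> 2) = - fst (\<rho> 1)" "a \<noteq> 0"
    using N \<open>b \<noteq> 0\<close> by (auto simp: pivot_minimal_mat2 valid_type_def)
  then obtain b' d' where R: "sym_equiv (mat2 a b c d) \<tau> \<rho>
      (mat2 a b' c d') \<tau> (\<rho>(2 := (fst (\<rho> 2), snd (\<rho> 1))))"
    and "b' \<noteq> 0" "fls_subdegree b' = fls_subdegree a"
    using pivot_row_align_step[OF C _ \<open>b \<noteq> 0\<close>] by blast
  then show ?thesis
    using pivot_row_rotation_step[OF sym_equiv_compatible[OF R C]] sym_equiv_trans[OF R]
      \<open>a \<noteq> 0\<close> \<open>fst (\<rho> 2) = - fst (\<rho> 1)\<close> by fastforce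
qed

lemma pivot_minimal_reduce_first_row:
  fixes A :: lmat
  assumes C: "sym_compatible_with A \<tau> \<rho>" and "pivot_minimal A" "A $ 1 $ 2 \<noteq> 0"
  shows "\<exists>B \<tau>' \<rho>'. sym_equiv A \<tau> \<rho> B \<tau>' \<rho>' \<and> pivot_minimal B \<and> (B, A) \<in> pivot_order"
proof -
  have "\<exists>B \<tau>' \<rho>'. sym_equiv A \<tau> \<rho> B \<tau>' \<rho>' \<and>
    (pivot_minimal B \<and> B $ 1 $ 1 = A $ 1 $ 1 \<and> offdiag_size B < offdiag_size A \<or>
     (\<exists>j k. B $ j $ k \<noteq> 0 \<and> laurent_width (B $ j $ k) < laurent_width (A $ 1 $ 1)))"
    using pivot_row_step[of "A $ 1 $ 1" "A $ 1 $ 2" "A $ 2 $ 1" "A $ 2 $ 2" \<tau> \<rho>] assms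
    by (simp flip: mat2_eta)
  then obtain B \<tau>' \<rho>' where R: "sym_equiv A \<tau> \<rho> B \<tau>' \<rho>'" and step:
    "pivot_minimal B \<and> B $ 1 $ 1 = A $ 1 $ 1 \<and> offdiag_size B < offdiag_size A \<or>
     (\<exists>j k. B $ j $ k \<noteq> 0 \<and> laurent_width (B $ j $ k) < laurent_width (A $ 1 $ 1))"
    by blast
  from step show ?thesis
  proof
    assume same_pivot: "pivot_minimal B \<and> B $ 1 $ 1 = A $ 1 $ 1 \<and> offdiag_size B < offdiag_size A"
    then have "(B, A) \<in> pivot_order"
      by (simp add: pivot_order_def)
    then show ?thesis
      using R same_pivot by blast
  next
    assume "\<exists>j k. B $ j $ k \<noteq> 0 \<and> laurent_width (B $ j $ k) < laurent_width (A $ 1 $ 1)"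
    then obtain j k :: 2
      where "B $ j $ k \<noteq> 0" "laurent_width (B $ j $ k) < laurent_width (A $ 1 $ 1)"
      by blast
    moreover obtain E :: lmat and \<tau>'' \<rho>'' where RE: "sym_equiv B \<tau>' \<rho>' E \<tau>'' \<rho>''"
      and "pivot_minimal E" "laurent_width (E $ 1 $ 1) \<le> laurent_width (B $ j $ k)"
      using exists_pivot_minimal[OF sym_equiv_compatible[OF R C] \<open>B $ j $ k \<noteq> 0\<close>] by blast
    ultimately have "pivot_minimal E" "(E, A) \<in> pivot_order"
      by (simp_all add: pivot_order_def)
    then show ?thesis
      using sym_equiv_trans[OF R RE] by blast
  qed
qed

lemma pivot_minimal_reduce:
  fixes A :: lmat
  assumes "sym_compatible_with A \<tau> \<rho>" "pivot_minimal A" "A $ 1 $ 2 \<noteq> 0 \<or> A $ 2 $ 1 \<noteq> 0"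
  shows "\<exists>B \<tau>' \<rho>'. sym_equiv A \<tau> \<rho> B \<tau>' \<rho>' \<and> pivot_minimal B \<and> (B, A) \<in> pivot_order"
proof (cases "A $ 1 $ 2 \<noteq> 0")
  case True
  then show ?thesis
    using pivot_minimal_reduce_first_row assms(1,2) by blast
next
  case False
  then have "transpose A $ 1 $ 2 \<noteq> 0"
    using assms(3) by (simp add: transpose_def)
  then obtain B \<tau>' \<rho>' where "sym_equiv (transpose A) (type_inverse \<circ> \<rho>) (type_inverse \<circ> \<tau>) B \<tau>' \<rho>'"
    "pivot_minimal B" "(B, transpose A) \<in> pivot_order"
    using pivot_minimal_reduce_first_row[OF sym_compatible_with_transpose[OF assms(1)]] assms(2)
    by (auto simp: pivot_minimal_transpose)
  moreover have "type_inverse \<circ> (type_inverse \<circ> \<sigma>) = \<sigma>" for \<sigma>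
    by (simp add: fun_eq_iff type_inverse_def)
  ultimately show ?thesis
    using sym_equiv_transpose pivot_minimal_transpose pivot_order_transpose
    by (metis transpose_transpose)
qed

lemma pivot_minimal_diagonalize:
  fixes A :: lmat
  assumes "sym_compatible_with A \<tau> \<rho>" "pivot_minimal A"
  shows "\<exists>\<tau>' \<rho>' e1 e2. sym_equiv A \<tau> \<rho> (diag2 e1 e2) \<tau>' \<rho>'"
  using assms
proof (induction A arbitrary: \<tau> \<rho> rule: wf_induct_rule[OF wf_pivot_order])
  case (1 A)
  show ?case
  proof (cases "A $ 1 $ 2 = 0 \<and> A $ 2 $ 1 = 0")
    case True
    then have "A = diag2 (A $ 1 $ 1) (A $ 2 $ 2)"
      by (subst mat2_eta) (simp add: diag2_eq_mat2)
    then show ?thesis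
      using sym_equiv_refl[OF "1.prems"(1)] by metis
  next
    case False
    then obtain B \<tau>' \<rho>' where "sym_equiv A \<tau> \<rho> B \<tau>' \<rho>'" "pivot_minimal B" "(B, A) \<in> pivot_order"
      using pivot_minimal_reduce "1.prems" by blast
    then show ?thesis
      using "1.IH" sym_equiv_compatible "1.prems"(1) sym_equiv_trans by metis
  qed
qed

lemma sym_diagonalize:
  fixes A :: lmat
  assumes "sym_compatible_with A \<tau> \<rho>"
  shows "\<exists>\<tau>' \<rho>' e1 e2. sym_equiv A \<tau> \<rho> (diag2 e1 e2) \<tau>' \<rho>'"
proof (cases "\<exists>j k. A $ j $ k \<noteq> 0")
  case True
  then obtain j k B \<tau>' \<rho>' where "sym_equiv A \<tau> \<rho> B \<tau>' \<rho>'" "pivot_minimal B"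
    using exists_pivot_minimal[OF assms] by blast
  then show ?thesis
    using pivot_minimal_diagonalize sym_equiv_compatible[OF _ assms] sym_equiv_trans by metis
next
  case False
  then have "A = diag2 0 0"
    by (subst mat2_eta) (simp add: diag2_eq_mat2)
  then show ?thesis
    using sym_equiv_refl[OF assms] by metis
qed

section \<open>Zero multiplicities\<close>

text \<open>Every Laurent polynomial is \<open>z\<^sup>s p(z)\<close> for a polynomial \<open>p\<close>; the zero multiplicities at
  \<open>z\<^sub>0 \<noteq> 0\<close> are those of \<open>p\<close>, independently of the chosen \<open>s\<close>.\<close>

definition laurent_of_poly :: "int \<Rightarrow> complex poly \<Rightarrow> complex fls" where
  "laurent_of_poly s p = fls_X_intpow s * poly_to_laurent p"

lemma laurent_of_poly_nth: "laurent_of_poly s p $$ n = (if s \<le> n then coeff p (nat (n - s)) else 0)"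
  by (simp add: laurent_of_poly_def fls_X_intpow_times_conv_shift poly_to_laurent_def)

lemma laurent_of_poly_inject: "laurent_of_poly s p = laurent_of_poly s q \<longleftrightarrow> p = q"
proof
  assume "laurent_of_poly s p = laurent_of_poly s q"
  then have "coeff p n = coeff q n" for n
    by (metis laurent_of_poly_nth[of s _ "s + int n"] le_add_same_cancel1 of_nat_0_le_iff
        add_diff_cancel_left' nat_int)
  then show "p = q"
    by (simp add: poly_eq_iff)
qed simp

lemma laurent_of_poly_0 [simp]: "laurent_of_poly s 0 = 0"
  by (simp add: fls_eq_iff laurent_of_poly_nth)

lemma laurent_of_poly_eq_0_iff [simp]: "laurent_of_poly s p = 0 \<longleftrightarrow> p = 0"
  by (metis laurent_of_poly_0 laurent_of_poly_inject)

lemma laurent_of_poly_add: "laurent_of_poly s p + laurent_of_poly s q = laurent_of_poly s (p + q)"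
  by (simp add: fls_eq_iff laurent_of_poly_nth)

lemma laurent_of_poly_diff: "laurent_of_poly s p - laurent_of_poly s q = laurent_of_poly s (p - q)"
  by (simp add: fls_eq_iff laurent_of_poly_nth)

lemma laurent_of_poly_mult:
  "laurent_of_poly s p * laurent_of_poly t q = laurent_of_poly (s + t) (p * q)"
proof -
  have "poly_to_laurent (p * q) = poly_to_laurent p * poly_to_laurent q"
    by (simp add: poly_to_laurent_def fps_of_poly_mult fls_times_fps_to_fls)
  moreover have "laurent_of_poly s p * laurent_of_poly t q =
      (fls_X_intpow s * fls_X_intpow t) * (poly_to_laurent p * poly_to_laurent q)"
    unfolding laurent_of_poly_def by (simp only: mult_ac)
  ultimately show ?thesis
    by (simp add: laurent_of_poly_def fls_X_intpow_times_fls_X_intpow)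
qed

lemma laurent_of_poly_shift:
  assumes "s \<le> t"
  shows "laurent_of_poly t q = laurent_of_poly s (monom 1 (nat (t - s)) * q)"
proof -
  have "nat (n - s) - nat (t - s) = nat (n - t)" if "t \<le> n" for n
    using that assms by auto
  then show ?thesis
    using assms by (auto simp: fls_eq_iff laurent_of_poly_nth coeff_monom_mult)
qed

lemma laurent_poly_laurent_of_poly: "laurent_poly (laurent_of_poly s p)"
proof -
  have "{k. laurent_of_poly s p $$ k \<noteq> 0} \<subseteq> {s..s + int (degree p)}"
  proof
    fix k
    assume "k \<in> {k. laurent_of_poly s p $$ k \<noteq> 0}"
    then have "s \<le> k" "nat (k - s) \<le> degree p"
      by (auto simp: laurent_of_poly_nth le_degree split: if_splits)
    then show "k \<in> {s..s + int (degree p)}"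
      by simp
  qed
  then show ?thesis
    unfolding laurent_poly_def by (rule finite_subset) simp
qed

lemma coeff_laurent_to_poly:
  assumes "laurent_poly u"
  shows "coeff (laurent_to_poly u) n = u $$ (fls_subdegree u + int n)"
proof (cases "n < Suc (nat (Max {k. u $$ k \<noteq> 0} - fls_subdegree u))")
  case True
  then show ?thesis
    by (simp add: laurent_to_poly_def nth_default_def del: upt_Suc)
next
  case False
  have "u $$ (fls_subdegree u + int n) = 0"
  proof (rule ccontr)
    assume "u $$ (fls_subdegree u + int n) \<noteq> 0"
    then have "fls_subdegree u + int n \<le> Max {k. u $$ k \<noteq> 0}"
      using assms by (intro Max_ge) (auto simp: laurent_poly_def)
    then show False
      using False by simp
  qed
  then show ?thesis
    using False by (simp add: laurent_to_poly_def nth_default_def del: upt_Suc)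
qed

lemma laurent_poly_eq_laurent_of_poly:
  assumes "laurent_poly u"
  shows "u = laurent_of_poly (fls_subdegree u) (laurent_to_poly u)"
  by (auto simp: fls_eq_iff laurent_of_poly_nth coeff_laurent_to_poly[OF assms])

lemma laurent_poly_common_base:
  assumes "laurent_poly u" "laurent_poly v"
  obtains s p q where "u = laurent_of_poly s p" "v = laurent_of_poly s q"
proof -
  let ?s = "min (fls_subdegree u) (fls_subdegree v)"
  have "u = laurent_of_poly ?s (monom 1 (nat (fls_subdegree u - ?s)) * laurent_to_poly u)"
    "v = laurent_of_poly ?s (monom 1 (nat (fls_subdegree v - ?s)) * laurent_to_poly v)"
    using laurent_poly_eq_laurent_of_poly[OF assms(1)] laurent_poly_eq_laurent_of_poly[OF assms(2)]
      laurent_of_poly_shift[of ?s "fls_subdegree u"] laurent_of_poly_shift[of ?s "fls_subdegree v"]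
    by simp_all
  then show ?thesis
    using that by blast
qed

lemma laurent_poly_add:
  assumes "laurent_poly u" "laurent_poly v"
  shows "laurent_poly (u + v)"
proof -
  obtain s p q where "u = laurent_of_poly s p" "v = laurent_of_poly s q"
    using laurent_poly_common_base[OF assms] .
  then show ?thesis
    by (simp add: laurent_of_poly_add laurent_poly_laurent_of_poly)
qed

lemma laurent_poly_diff:
  assumes "laurent_poly u" "laurent_poly v"
  shows "laurent_poly (u - v)"
proof -
  obtain s p q where "u = laurent_of_poly s p" "v = laurent_of_poly s q"
    using laurent_poly_common_base[OF assms] .
  then show ?thesis
    by (simp add: laurent_of_poly_diff laurent_poly_laurent_of_poly)
qed

lemma laurent_poly_mult:
  assumes "laurent_poly u" "laurent_poly v"
  shows "laurent_poly (u * v)"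
  using laurent_poly_eq_laurent_of_poly[OF assms(1)] laurent_poly_eq_laurent_of_poly[OF assms(2)]
  by (metis laurent_of_poly_mult laurent_poly_laurent_of_poly)

lemma laurent_poly_zero: "laurent_poly 0"
  using laurent_poly_laurent_of_poly[of _ 0] by simp

lemma laurent_poly_uminus: "laurent_poly u \<Longrightarrow> laurent_poly (- u)"
  using laurent_poly_diff[OF laurent_poly_zero] by fastforce

lemma laurent_poly_poly_to_laurent: "laurent_poly (poly_to_laurent p)"
  using laurent_poly_laurent_of_poly[of 0 p] by (simp add: laurent_of_poly_def)

lemma order_eq_if_laurent_of_poly_eq:
  assumes "laurent_of_poly s p = laurent_of_poly t q" "q \<noteq> 0" "z0 \<noteq> 0"
  shows "order z0 p = order z0 q"
proof -
  have shifted: "order z0 p = order z0 q"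
    if "laurent_of_poly s p = laurent_of_poly t q" "s \<le> t" "q \<noteq> 0" for s t p q
  proof -
    have "laurent_of_poly s p = laurent_of_poly s (monom 1 (nat (t - s)) * q)"
      using that(1) laurent_of_poly_shift[OF that(2)] by simp
    then have "p = monom 1 (nat (t - s)) * q"
      unfolding laurent_of_poly_inject .
    moreover have "order z0 (monom (1::complex) (nat (t - s))) = 0"
      using assms(3) by (intro order_0I) (simp add: poly_monom)
    ultimately show ?thesis
      using that(3) by (simp add: order_mult)
  qed
  have "p \<noteq> 0"
  proof
    assume "p = 0"
    then have "laurent_of_poly t q = 0"
      using assms(1) by simp
    with assms(2) show False
      by simp
  qed
  show ?thesis
  proof (cases "s \<le> t")
    case True
    show ?thesis
      by (rule shifted[OF assms(1) True assms(2)])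
  next
    case False
    then show ?thesis
      using shifted[OF assms(1)[symmetric] _ \<open>p \<noteq> 0\<close>] by simp
  qed
qed

lemma zero_mult_laurent_of_poly:
  assumes "p \<noteq> 0" "z0 \<noteq> 0"
  shows "zero_mult (laurent_of_poly s p) z0 = order z0 p"
proof -
  let ?u = "laurent_of_poly s p"
  have "?u = laurent_of_poly (fls_subdegree ?u) (laurent_to_poly ?u)"
    by (rule laurent_poly_eq_laurent_of_poly[OF laurent_poly_laurent_of_poly])
  moreover have "?u \<noteq> 0"
    using assms(1) by simp
  ultimately have "laurent_to_poly ?u \<noteq> 0" "order z0 p = order z0 (laurent_to_poly ?u)"
    using order_eq_if_laurent_of_poly_eq[of s p _ "laurent_to_poly ?u", OF _ _ assms(2)]
    by (metis laurent_of_poly_eq_0_iff)+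
  then show ?thesis
    using \<open>?u \<noteq> 0\<close> by (simp add: zero_mult_def)
qed

lemma zero_mult_zero [simp]: "zero_mult 0 z0 = \<infinity>"
  by (simp add: zero_mult_def)

lemma zero_mult_mult:
  assumes "laurent_poly u" "laurent_poly v" "z0 \<noteq> 0"
  shows "zero_mult (u * v) z0 = zero_mult u z0 + zero_mult v z0"
proof (cases "u = 0 \<or> v = 0")
  case False
  obtain s t p q where "u = laurent_of_poly s p" "v = laurent_of_poly t q"
    using laurent_poly_eq_laurent_of_poly assms(1,2) by blast
  with False show ?thesis
    using assms(3) by (simp add: laurent_of_poly_mult zero_mult_laurent_of_poly order_mult)
qed auto

lemma order_add_ge:
  assumes "p + q \<noteq> 0"
  shows "min (order a p) (order a q) \<le> order a (p + q)"
proof -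
  have "[:- a, 1:] ^ min (order a p) (order a q) dvd p + q"
    by (meson dvd_add min.cobounded1 min.cobounded2 order_divides)
  with assms show ?thesis
    using order_divides by blast
qed

lemma zero_mult_add:
  assumes "laurent_poly u" "laurent_poly v" "z0 \<noteq> 0"
  shows "min (zero_mult u z0) (zero_mult v z0) \<le> zero_mult (u + v) z0"
proof (cases "u = 0 \<or> v = 0 \<or> u + v = 0")
  case False
  obtain s p q where "u = laurent_of_poly s p" "v = laurent_of_poly s q"
    using laurent_poly_common_base[OF assms(1,2)] by blast
  with False show ?thesis
    using assms(3) order_add_ge[of p q z0]
    by (simp add: laurent_of_poly_add zero_mult_laurent_of_poly)
qed auto

lemma laurent_monom_eq_laurent_of_poly: "laurent_monom m c = laurent_of_poly m [:c:]"
  by (auto simp: fls_eq_iff laurent_of_poly_nth coeff_pCons split: nat.splits)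

lemma laurent_poly_monomial: "is_monomial u \<Longrightarrow> laurent_poly u"
  unfolding is_monomial_iff laurent_monom_eq_laurent_of_poly
  by (auto intro: laurent_poly_laurent_of_poly)

lemma zero_mult_monomial:
  assumes "is_monomial u" "z0 \<noteq> 0"
  shows "zero_mult u z0 = 0"
proof -
  obtain c m where "c \<noteq> 0" "u = laurent_of_poly m [:c:]"
    using assms(1) unfolding is_monomial_iff laurent_monom_eq_laurent_of_poly by blast
  moreover have "order z0 [:c:] = 0"
    using \<open>c \<noteq> 0\<close> by (intro order_0I) simp
  ultimately show ?thesis
    using assms(2) by (simp add: zero_mult_laurent_of_poly zero_enat_def)
qed

section \<open>Invariance of the zero multiplicities\<close>

lemma laurent_mat_mult: "laurent_mat X \<Longrightarrow> laurent_mat M \<Longrightarrow> laurent_mat (X ** M)"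
  unfolding laurent_mat_def matrix_mult_nth_2 by (auto intro!: laurent_poly_add laurent_poly_mult)

lemma laurent_poly_det: "laurent_mat X \<Longrightarrow> laurent_poly (det X)"
  unfolding laurent_mat_def det_2 by (auto intro!: laurent_poly_diff laurent_poly_mult)

lemma laurent_mat_mat2:
  "laurent_mat (mat2 a b c d) \<longleftrightarrow> laurent_poly a \<and> laurent_poly b \<and> laurent_poly c \<and> laurent_poly d"
  unfolding laurent_mat_def forall_2 by simp

lemma inverse_laurent_monom:
  fixes c :: complex
  assumes "c \<noteq> 0"
  shows "inverse (laurent_monom m c) = laurent_monom (- m) (inverse c)"
  by (rule inverse_unique) (simp add: assms laurent_monom_mult one_eq_laurent_monom)

lemma scalar_mat2_commute: "mat2 s 0 0 s ** X = X ** mat2 s 0 0 s"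
  for X :: "'a::comm_ring_1 ^ 2 ^ 2"
  by (subst (1 2) mat2_eta[of X]) (simp add: mat2_mult mult.commute)

lemma strongly_invertible_inverse:
  assumes "laurent_mat P" "strongly_invertible P"
  obtains P' where "laurent_mat P'" "P' ** P = mat 1" "P ** P' = mat 1"
proof -
  obtain c m where "c \<noteq> 0" and det: "det P = laurent_monom m c"
    using assms(2) unfolding strongly_invertible_def is_monomial_iff by blast
  define s where "s = inverse (det P)"
  have "s * det P = 1"
    using \<open>c \<noteq> 0\<close> by (simp add: s_def det)
  have "s = laurent_monom (- m) (inverse c)"
    using \<open>c \<noteq> 0\<close> by (simp add: s_def det inverse_laurent_monom)
  then have "laurent_poly s"
    by (simp add: laurent_monom_eq_laurent_of_poly laurent_poly_laurent_of_poly)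
  define P' where "P' = mat2 s 0 0 s ** adjugate2 P"
  have "laurent_poly (P $ j $ k)" for j k
    using assms(1) by (simp add: laurent_mat_def)
  then have "laurent_mat (mat2 s 0 0 s)" "laurent_mat (adjugate2 P)"
    using \<open>laurent_poly s\<close>
    by (simp_all add: laurent_mat_mat2 adjugate2_def laurent_poly_zero laurent_poly_uminus)
  then have "laurent_mat P'"
    unfolding P'_def by (rule laurent_mat_mult)
  moreover have "P' ** P = mat 1"
    using \<open>s * det P = 1\<close>
    by (simp add: P'_def matrix_mul_assoc[symmetric] adjugate2_mult mat2_mult mat_1_eq_mat2)
  moreover have "P ** P' = mat 1"
    using \<open>s * det P = 1\<close>
    by (simp add: P'_def scalar_mat2_commute matrix_mul_assoc mult_adjugate2 mat2_mult
        mat_1_eq_mat2 mult.commute)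
  ultimately show ?thesis
    using that by blast
qed

definition min_zero_mult :: "complex \<Rightarrow> lmat \<Rightarrow> enat" where
  "min_zero_mult z0 A =
     min (min (zero_mult (A $ 1 $ 1) z0) (zero_mult (A $ 1 $ 2) z0))
         (min (zero_mult (A $ 2 $ 1) z0) (zero_mult (A $ 2 $ 2) z0))"

lemma min_zero_mult_le: "min_zero_mult z0 A \<le> zero_mult (A $ j $ k) z0"
  unfolding min_zero_mult_def using exhaust_2[of j] exhaust_2[of k]
  by (auto simp: min.coboundedI1 min.coboundedI2)

lemma min_zero_mult_geI: "(\<And>j k. x \<le> zero_mult (A $ j $ k) z0) \<Longrightarrow> x \<le> min_zero_mult z0 A"
  by (simp add: min_zero_mult_def)

lemma min_zero_mult_diag2: "min_zero_mult z0 (diag2 a b) = min (zero_mult a z0) (zero_mult b z0)"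
  by (simp add: min_zero_mult_def diag2_eq_mat2)

lemma min_zero_mult_mult:
  assumes "laurent_mat X" "laurent_mat M" "z0 \<noteq> 0"
  shows "max (min_zero_mult z0 X) (min_zero_mult z0 M) \<le> min_zero_mult z0 (X ** M)"
proof (rule min_zero_mult_geI)
  fix j k
  let ?m = "max (min_zero_mult z0 X) (min_zero_mult z0 M)"
  have "?m \<le> zero_mult (X $ j $ i * M $ i $ k) z0" for i
    using min_zero_mult_le[of z0 X j i] min_zero_mult_le[of z0 M i k]
      zero_mult_mult[of "X $ j $ i" "M $ i $ k"] assms
    by (auto simp: laurent_mat_def intro: add_increasing add_increasing2)
  moreover have "min (zero_mult (X $ j $ 1 * M $ 1 $ k) z0) (zero_mult (X $ j $ 2 * M $ 2 $ k) z0)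
      \<le> zero_mult ((X ** M) $ j $ k) z0"
    unfolding matrix_mult_nth_2 using assms
    by (intro zero_mult_add laurent_poly_mult) (auto simp: laurent_mat_def)
  ultimately show "?m \<le> zero_mult ((X ** M) $ j $ k) z0"
    by (meson min.boundedI order_trans)
qed

lemma min_zero_mult_equiv:
  assumes "laurent_mat P" "laurent_mat A" "laurent_mat Q"
    and "strongly_invertible P" "strongly_invertible Q" "z0 \<noteq> 0"
  shows "min_zero_mult z0 (P ** A ** Q) = min_zero_mult z0 A"
proof -
  have grow: "min_zero_mult z0 M \<le> min_zero_mult z0 (X ** M ** Y)"
    if "laurent_mat X" "laurent_mat M" "laurent_mat Y" for X M Y
    using min_zero_mult_mult[of X M z0] min_zero_mult_mult[of "X ** M" Y z0] that assms(6)
    by (meson laurent_mat_mult max.bounded_iff order_trans)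
  obtain P' Q' where "laurent_mat P'" "P' ** P = mat 1" "laurent_mat Q'" "Q ** Q' = mat 1"
    using strongly_invertible_inverse assms(1,3,4,5) by metis
  moreover have "P' ** (P ** A ** Q) ** Q' = (P' ** P) ** A ** (Q ** Q')"
    by (simp add: matrix_mul_assoc)
  ultimately have "min_zero_mult z0 (P ** A ** Q) \<le> min_zero_mult z0 A"
    using grow[of P' "P ** A ** Q" Q'] assms(1-3) by (simp add: laurent_mat_mult)
  then show ?thesis
    using grow[OF assms(1-3)] by simp
qed

lemma zero_mult_det_equiv:
  assumes "laurent_mat A" "strongly_invertible P" "strongly_invertible Q" "z0 \<noteq> 0"
  shows "zero_mult (det (P ** A ** Q)) z0 = zero_mult (det A) z0"
  using assms laurent_poly_det[OF assms(1)]
  by (simp add: det_mul strongly_invertible_def zero_mult_mult laurent_poly_monomial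
      laurent_poly_mult zero_mult_monomial)

lemma mset_pair_eq_if_min_add_eq:
  fixes x y u v :: enat
  assumes "min x y = min u v" "x + y = u + v"
  shows "{#x, y#} = {#u, v#}"
proof -
  have pair: "{#a, b#} = {#min a b, max a b#}" and sum: "a + b = min a b + max a b" for a b :: enat
    by (cases "a \<le> b"; simp add: add_mset_commute add.commute min_def max_def)+
  have "min x y = \<infinity> \<or> max x y = max u v"
    using sum[of x y] sum[of u v] assms by (metis enat_add_left_cancel)
  then have "max x y = max u v"
    using assms(1) by (auto simp: min_def max_def split: if_splits)
  then show ?thesis
    using pair assms(1) by metis
qed

lemma zero_mults_diag2_unique:
  assumes "laurent_mat P" "laurent_mat A" "laurent_mat Q"
    and "strongly_invertible P" "strongly_invertible Q"
    and "laurent_mat E" "laurent_mat F" "strongly_invertible E" "strongly_invertible F"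
    and "P ** A ** Q = diag2 a b" "A = E ** diag2 c d ** F" "laurent_poly c" "laurent_poly d"
    and "z0 \<noteq> 0"
  shows "{#zero_mult a z0, zero_mult b z0#} = {#zero_mult c z0, zero_mult d z0#}"
proof (rule mset_pair_eq_if_min_add_eq)
  have cd: "laurent_mat (diag2 c d)"
    using assms(12,13) by (simp add: diag2_eq_mat2 laurent_mat_mat2 laurent_poly_zero)
  have "laurent_mat (diag2 a b)"
    using assms(1-3,10) by (metis laurent_mat_mult)
  then have ab: "laurent_poly a" "laurent_poly b"
    by (simp_all add: laurent_mat_mat2 diag2_eq_mat2)
  have "min_zero_mult z0 (diag2 a b) = min_zero_mult z0 A"
    using min_zero_mult_equiv[OF assms(1-5,14)] assms(10) by simp
  also have "\<dots> = min_zero_mult z0 (diag2 c d)"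
    using min_zero_mult_equiv[OF assms(6) cd assms(7-9,14)] assms(11) by simp
  finally show "min (zero_mult a z0) (zero_mult b z0) = min (zero_mult c z0) (zero_mult d z0)"
    by (simp add: min_zero_mult_diag2)
  have "zero_mult (det (diag2 a b)) z0 = zero_mult (det A) z0"
    using zero_mult_det_equiv[OF assms(2,4,5,14)] assms(10) by simp
  also have "\<dots> = zero_mult (det (diag2 c d)) z0"
    using zero_mult_det_equiv[OF cd assms(8,9,14)] assms(11) by simp
  finally show "zero_mult a z0 + zero_mult b z0 = zero_mult c z0 + zero_mult d z0"
    using zero_mult_mult[OF ab assms(14)] zero_mult_mult[OF assms(12,13,14)]
    by (simp add: diag2_eq_mat2 det_mat2)
qed

lemma has_symmetry_diag2:
  assumes "sym_compatible_with (diag2 a b) \<tau> \<rho>"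
  shows "has_symmetry a" "has_symmetry b"
  using assms valid_type_quot unfolding diag2_eq_mat2 sym_compatible_with_mat2 has_symmetry_def
  by blast+

theorem theorem3p13:
  fixes A :: lmat
  assumes "laurent_mat A" and "compatible_symmetry A"
  shows "\<exists>P Q e1 e2.
           laurent_mat P \<and> laurent_mat Q \<and>
           strongly_invertible P \<and> strongly_invertible Q \<and>
           compatible_symmetry P \<and> compatible_symmetry Q \<and>
           compatible_product3 P A Q \<and>
           P ** A ** Q = diag2 e1 e2 \<and>
           has_symmetry e1 \<and> has_symmetry e2 \<and>
           (\<forall>d1 d2. invariant_polys A d1 d2 \<longrightarrow>
              (\<forall>z0::complex. z0 \<noteq> 0 \<longrightarrow>
                 {# zero_mult e1 z0, zero_mult e2 z0 #} =
                 {# zero_mult (poly_to_laurent d1) z0, zero_mult (poly_to_laurent d2) z0 #}))"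
proof -
  obtain \<tau> \<rho> where C: "sym_compatible_with A \<tau> \<rho>"
    using assms(2) unfolding compatible_symmetry_def by blast
  obtain \<tau>' \<rho>' e1 e2 where "sym_equiv A \<tau> \<rho> (diag2 e1 e2) \<tau>' \<rho>'"
    using sym_diagonalize[OF C] by blast
  then obtain P Q where CP: "sym_compatible_with P \<tau>' \<tau>" and CQ: "sym_compatible_with Q \<rho> \<rho>'"
    and SP: "strongly_invertible P" and SQ: "strongly_invertible Q"
    and PAQ: "P ** A ** Q = diag2 e1 e2"
    unfolding sym_equiv_def sym_unimodular_def by metis
  have LP: "laurent_mat P" and LQ: "laurent_mat Q"
    using CP CQ by (simp_all add: sym_compatible_imp_laurent_mat)
  have "has_symmetry e1" "has_symmetry e2"
    using has_symmetry_diag2 sym_compatible_with_mult[OF sym_compatible_with_mult[OF CP C] CQ] PAQ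
    by metis+
  moreover have "{#zero_mult e1 z0, zero_mult e2 z0#} =
      {#zero_mult (poly_to_laurent d1) z0, zero_mult (poly_to_laurent d2) z0#}"
    if "invariant_polys A d1 d2" "z0 \<noteq> 0" for d1 d2 z0
    using that zero_mults_diag2_unique[OF LP assms(1) LQ SP SQ _ _ _ _ PAQ]
    unfolding invariant_polys_def by (metis laurent_poly_poly_to_laurent)
  ultimately show ?thesis
    using LP LQ SP SQ CP C CQ PAQ unfolding compatible_symmetry_def compatible_product3_def by blast
qed
end
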